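(* Let $d\ge 2$ and consider a linear multiparameter eigenvalue problem $W_i(\mathbf{x})\mathbf{v}_i=\big(V_{i0}-\sum_{j=1}^d x_jV_{ij}\big)\mathbf{v}_i=0$, $1\le i\le d$, with $V_{ij}\in\mathbb{C}^{n_i\times n_i}$. Let $f_{\text{Dixon}}$ be the tensor Dixon function of $P_i=W_i$ with $x_d$ hidden. Then $f_{\text{Dixon}}$ does not depend on $s_1,\dots,s_{d-1},t_1,\dots,t_{d-1}$, and the generalized eigenvalue problem $f_{\text{Dixon}}(x_d)\mathbf{z}=0$ it yields is the same as the operator determinant generalized eigenvalue problem $(\Delta_d-x_d\Delta_0)\mathbf{z}=0$; precisely, $f_{\text{Dixon}}=c\,(\Delta_d-x_d\Delta_0)$ for some $c\in\{1,-1\}$.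
   Context: Kronecker block determinant: for a $d\times d$ array $M=(M_{ij})$ with $M_{ij}$ of size $n_i\times n_i$, $|M|_\otimes=\sum_{\sigma\in S_d}\mathrm{sgn}(\sigma)\,M_{1,\sigma(1)}\otimes M_{2,\sigma(2)}\otimes\cdots\otimes M_{d,\sigma(d)}$. Operator determinants: $\Delta_0=|(V_{ij})_{1\le i,j\le d}|_\otimes$, and $\Delta_d$ is the Kronecker block determinant of the array obtained from $(V_{ij})_{1\le i,j\le d}$ by replacing its $d$-th column with $(V_{10},\dots,V_{d0})^\top$. Tensor Dixon function with $x_d$ hidden: with variables $s_1,\dots,s_{d-1},t_1,\dots,t_{d-1},x_d$, let $M_{ij}=P_i(t_1,\dots,t_{j-1},s_j,\dots,s_{d-1},x_d)$ for $1\le i,j\le d$ (column $1$ at $(s_1,\dots,s_{d-1},x_d)$, column $d$ at $(t_1,\dots,t_{d-1},x_d)$), and $f_{\text{Dixon}}=|M|_\otimes/\prod_{i=1}^{d-1}(s_i-t_i)$. *)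

theory Defs
  imports "Jordan_Normal_Form.Matrix" "HOL-Combinatorics.Permutations"
begin

definition kron :: "'a::times mat \<Rightarrow> 'a mat \<Rightarrow> 'a mat" where
  "kron A B = mat (dim_row A * dim_row B) (dim_col A * dim_col B)
     (\<lambda>(r, c). A $$ (r div dim_row B, c div dim_col B) * B $$ (r mod dim_row B, c mod dim_col B))"

fun kron_list :: "'a::comm_ring_1 mat list \<Rightarrow> 'a mat" where
  "kron_list [] = 1\<^sub>m 1"
| "kron_list (A # As) = kron A (kron_list As)"

definition kron_det :: "nat \<Rightarrow> (nat \<Rightarrow> nat \<Rightarrow> 'a::comm_ring_1 mat) \<Rightarrow> 'a mat" where
  "kron_det d A = (let N = (\<Prod>i\<in>{1..d}. dim_row (A i i)) in
     mat N N (\<lambda>rc. \<Sum>\<sigma>\<in>{\<sigma>. \<sigma> permutes {1..d}}.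
        of_int (sign \<sigma>) * kron_list (map (\<lambda>i. A i (\<sigma> i)) [1..<d+1]) $$ rc))"

definition W :: "(nat \<Rightarrow> nat) \<Rightarrow> (nat \<Rightarrow> nat \<Rightarrow> complex mat) \<Rightarrow> nat \<Rightarrow> nat \<Rightarrow> (nat \<Rightarrow> complex) \<Rightarrow> complex mat" where
  "W n V d i y = mat (n i) (n i) (\<lambda>rc. V i 0 $$ rc - (\<Sum>j\<in>{1..d}. y j * V i j $$ rc))"

text \<open>Point at which column j of the Dixon array is evaluated:
  (t_1,...,t_{j-1}, s_j,...,s_{d-1}, x_d).\<close>
definition dixon_pt :: "nat \<Rightarrow> (nat \<Rightarrow> complex) \<Rightarrow> (nat \<Rightarrow> complex) \<Rightarrow> complex \<Rightarrow> nat \<Rightarrow> nat \<Rightarrow> complex" where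
  "dixon_pt d s t x j k = (if k = d then x else if k < j then t k else s k)"

definition f_dixon :: "(nat \<Rightarrow> nat) \<Rightarrow> (nat \<Rightarrow> nat \<Rightarrow> complex mat) \<Rightarrow> nat
    \<Rightarrow> (nat \<Rightarrow> complex) \<Rightarrow> (nat \<Rightarrow> complex) \<Rightarrow> complex \<Rightarrow> complex mat" where
  "f_dixon n V d s t x =
     (1 / (\<Prod>i\<in>{1..d-1}. (s i - t i))) \<cdot>\<^sub>m kron_det d (\<lambda>i j. W n V d i (dixon_pt d s t x j))"

definition Delta0 :: "(nat \<Rightarrow> nat \<Rightarrow> complex mat) \<Rightarrow> nat \<Rightarrow> complex mat" where
  "Delta0 V d = kron_det d (\<lambda>i j. V i j)"

definition Deltad :: "(nat \<Rightarrow> nat \<Rightarrow> complex mat) \<Rightarrow> nat \<Rightarrow> complex mat" where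
  "Deltad V d = kron_det d (\<lambda>i j. if j = d then V i 0 else V i j)"

end

theory Submission
  imports Defs "Jordan_Normal_Form.Determinant"
begin

text \<open>
  An entry of a Kronecker product is the product of entries of its factors, indexed by the
  mixed-radix digits of the row and column index. Hence an entry of a Kronecker block determinant
  is the ordinary determinant of the \<open>d \<times> d\<close> array of the corresponding block entries, and all
  three operator determinants reduce entrywise to scalar determinants with the same coefficients.

  In the scalar Dixon matrix, column \<open>j + 1\<close> minus column \<open>j\<close> is \<open>(s\<^sub>j\<^sub>+\<^sub>1 - t\<^sub>j\<^sub>+\<^sub>1)\<close> times the
  coefficient column \<open>a\<^sub>j\<^sub>+\<^sub>1\<close>. So the matrix factors as \<open>Z T\<close> with \<open>T\<close> upper triangular of determinant
  \<open>\<Prod>(s\<^sub>j - t\<^sub>j)\<close>, and \<open>Z\<close> has columns \<open>a\<^sub>0 - \<Sum>\<^sub>k p\<^sub>k a\<^sub>k, a\<^sub>1, \<dots>, a\<^sub>d\<^sub>-\<^sub>1\<close> with \<open>p\<^sub>d = x\<close>. Since the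
  determinant is multilinear and alternating, only \<open>a\<^sub>0 - x a\<^sub>d\<close> survives in the first column, and
  moving that column to the end contributes the sign \<open>(-1)\<^sup>d\<^sup>-\<^sup>1\<close>.
\<close>

lemma det_def_one_based:
  fixes a :: "nat \<Rightarrow> nat \<Rightarrow> 'a::comm_ring_1"
  shows "det (mat d d (\<lambda>(i, j). a (Suc i) (Suc j))) =
    (\<Sum>\<sigma> | \<sigma> permutes {1..d}. of_int (sign \<sigma>) * (\<Prod>i<d. a (Suc i) (\<sigma> (Suc i))))"
proof -
  have Suc_bij: "bij_betw Suc {0..<d} {1..d}"
    by (simp add: bij_betw_def atLeastLessThanSuc_atLeastAtMost)
  have "det (mat d d (\<lambda>(i, j). a (Suc i) (Suc j))) =
      (\<Sum>q | q permutes {0..<d}. of_int (sign q) * (\<Prod>i<d. a (Suc i) (Suc (q i))))"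
    unfolding det_def'[OF mat_carrier]
    by (intro sum.cong refl arg_cong2[where f = "(*)"] prod.cong) (auto simp: permutes_in_image)
  also have "\<dots> = (\<Sum>\<sigma> | \<sigma> permutes {1..d}. of_int (sign \<sigma>) * (\<Prod>i<d. a (Suc i) (\<sigma> (Suc i))))"
  proof (rule sum.reindex_bij_witness[where i = "map_permutation {1..d} (\<lambda>i. i - 1)"
        and j = "map_permutation {0..<d} Suc"])
    fix q assume "q \<in> {q. q permutes {0..<d}}"
    then have q: "q permutes {0..<d}" by simp
    show "map_permutation {1..d} (\<lambda>i. i - 1) (map_permutation {0..<d} Suc q) = q"
      using Suc_bij q by (rule map_permutation_compose_inv) simp
    show "map_permutation {0..<d} Suc q \<in> {\<sigma>. \<sigma> permutes {1..d}}"
      using map_permutation_permutes[OF Suc_bij q] by simp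
    have "map_permutation {0..<d} Suc q (Suc i) = Suc (q i)" if "i < d" for i
      using that by (simp add: map_permutation_apply)
    then show "of_int (sign (map_permutation {0..<d} Suc q)) *
        (\<Prod>i<d. a (Suc i) (map_permutation {0..<d} Suc q (Suc i))) =
        of_int (sign q) * (\<Prod>i<d. a (Suc i) (Suc (q i)))"
      using q by (simp add: sign_map_permutation)
  next
    fix \<sigma> assume "\<sigma> \<in> {\<sigma>. \<sigma> permutes {1..d}}"
    then have \<sigma>: "\<sigma> permutes {1..d}" by simp
    have pred_bij: "bij_betw (\<lambda>i. i - 1) {1..d} {0..<d}"
      by (rule bij_betw_byWitness[where f' = Suc]) auto
    show "map_permutation {0..<d} Suc (map_permutation {1..d} (\<lambda>i. i - 1) \<sigma>) = \<sigma>"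
      using pred_bij \<sigma> by (rule map_permutation_compose_inv) simp
    show "map_permutation {1..d} (\<lambda>i. i - 1) \<sigma> \<in> {q. q permutes {0..<d}}"
      using map_permutation_permutes[OF pred_bij \<sigma>] by simp
  qed
  finally show ?thesis .
qed

text \<open>Digits are read most significant first, as in \<^const>\<open>kron\<close>, where the left factor indexes the blocks.\<close>
fun radix_digit :: "nat list \<Rightarrow> nat \<Rightarrow> nat \<Rightarrow> nat" where
  "radix_digit [] i r = 0"
| "radix_digit (m # ms) 0 r = r div prod_list ms"
| "radix_digit (m # ms) (Suc i) r = radix_digit ms i (r mod prod_list ms)"

lemma radix_digit_less:
  "r < prod_list ms \<Longrightarrow> i < length ms \<Longrightarrow> radix_digit ms i r < ms ! i"
proof (induction ms i r rule: radix_digit.induct)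
  case (2 m ms r)
  then show ?case by (simp add: less_mult_imp_div_less mult.commute)
next
  case (3 m ms i r)
  then have "prod_list ms > 0" by (cases "prod_list ms") auto
  with 3 show ?case by simp
qed simp

lemma kron_list_carrier:
  "list_all2 (\<lambda>A m. A \<in> carrier_mat m m) As ms \<Longrightarrow>
    kron_list As \<in> carrier_mat (prod_list ms) (prod_list ms)"
  by (induction rule: list_all2_induct) (auto simp: kron_def)

lemma index_kron_list:
  assumes "list_all2 (\<lambda>A m. A \<in> carrier_mat m m) As ms"
    and "r < prod_list ms" "c < prod_list ms"
  shows "kron_list As $$ (r, c) =
    (\<Prod>i<length ms. As ! i $$ (radix_digit ms i r, radix_digit ms i c))"
  using assms
proof (induction arbitrary: r c rule: list_all2_induct)
  case (Cons A As m ms)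
  let ?N = "prod_list ms"
  have "?N > 0" using Cons.prems by (cases ?N) auto
  then have "kron_list (A # As) $$ (r, c) =
      A $$ (r div ?N, c div ?N) * kron_list As $$ (r mod ?N, c mod ?N)"
    using Cons kron_list_carrier[OF Cons.hyps(2)] by (auto simp: kron_def)
  also have "\<dots> = A $$ (r div ?N, c div ?N) *
      (\<Prod>i<length ms. As ! i $$ (radix_digit ms i (r mod ?N), radix_digit ms i (c mod ?N)))"
    using \<open>?N > 0\<close> by (simp add: Cons.IH)
  finally show ?case
    by (simp only: length_Cons prod.lessThan_Suc_shift) simp
qed simp

lemma prod_list_map_upt_one: "prod_list (map n [1..<d+1]) = (\<Prod>i\<in>{1..d}. n i)"
  by (simp add: prod.distinct_set_conv_list[symmetric] atLeastLessThanSuc_atLeastAtMost del: upt_Suc)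

lemma kron_det_def':
  assumes "\<And>i j. i \<in> {1..d} \<Longrightarrow> j \<in> {1..d} \<Longrightarrow> A i j \<in> carrier_mat (n i) (n i)"
  shows "kron_det d A = mat (prod_list (map n [1..<d+1])) (prod_list (map n [1..<d+1]))
    (\<lambda>rc. \<Sum>\<sigma> | \<sigma> permutes {1..d}. of_int (sign \<sigma>) * kron_list (map (\<lambda>i. A i (\<sigma> i)) [1..<d+1]) $$ rc)"
proof -
  have "(\<Prod>i\<in>{1..d}. dim_row (A i i)) = prod_list (map n [1..<d+1])"
    using assms unfolding prod_list_map_upt_one by (intro prod.cong) auto
  then show ?thesis
    unfolding kron_det_def Let_def by simp
qed

lemma kron_det_carrier:
  assumes "\<And>i j. i \<in> {1..d} \<Longrightarrow> j \<in> {1..d} \<Longrightarrow> A i j \<in> carrier_mat (n i) (n i)"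
  shows "kron_det d A \<in> carrier_mat (prod_list (map n [1..<d+1])) (prod_list (map n [1..<d+1]))"
  by (subst kron_det_def'[where n = n]) (use assms in auto)

lemma index_kron_det:
  fixes A :: "nat \<Rightarrow> nat \<Rightarrow> 'a::comm_ring_1 mat"
  assumes blocks: "\<And>i j. i \<in> {1..d} \<Longrightarrow> j \<in> {1..d} \<Longrightarrow> A i j \<in> carrier_mat (n i) (n i)"
    and r: "r < prod_list (map n [1..<d+1])" and c: "c < prod_list (map n [1..<d+1])"
  shows "kron_det d A $$ (r, c) = det (mat d d (\<lambda>(i, j).
    A (Suc i) (Suc j) $$ (radix_digit (map n [1..<d+1]) i r, radix_digit (map n [1..<d+1]) i c)))"
proof -
  let ?ms = "map n [1..<d+1]"
  let ?entry = "\<lambda>i j. A i j $$ (radix_digit ?ms (i - 1) r, radix_digit ?ms (i - 1) c)"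
  have "kron_det d A $$ (r, c) = (\<Sum>\<sigma> | \<sigma> permutes {1..d}.
      of_int (sign \<sigma>) * kron_list (map (\<lambda>i. A i (\<sigma> i)) [1..<d+1]) $$ (r, c))"
    using r c by (subst kron_det_def'[where n = n]) (use blocks in auto)
  also have "\<dots> = (\<Sum>\<sigma> | \<sigma> permutes {1..d}. of_int (sign \<sigma>) * (\<Prod>i<d. ?entry (Suc i) (\<sigma> (Suc i))))"
  proof (intro sum.cong refl arg_cong2[where f = "(*)"])
    fix \<sigma> assume "\<sigma> \<in> {\<sigma>. \<sigma> permutes {1..d}}"
    then have "\<sigma> i \<in> {1..d}" if "i \<in> {1..d}" for i
      using that by (simp only: mem_Collect_eq permutes_in_image)
    then have "list_all2 (\<lambda>A m. A \<in> carrier_mat m m) (map (\<lambda>i. A i (\<sigma> i)) [1..<d+1]) ?ms"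
      by (auto simp: list_all2_map1 list_all2_map2 list_all2_same blocks simp del: upt_Suc)
    from index_kron_list[OF this r c]
    show "kron_list (map (\<lambda>i. A i (\<sigma> i)) [1..<d+1]) $$ (r, c) = (\<Prod>i<d. ?entry (Suc i) (\<sigma> (Suc i)))"
      by (simp add: nth_map_upt del: upt_Suc)
  qed
  also have "\<dots> = det (mat d d (\<lambda>(i, j). ?entry (Suc i) (Suc j)))"
    by (rule det_def_one_based[symmetric])
  finally show ?thesis by simp
qed

lemma det_first_col_expansion:
  fixes a :: "nat \<Rightarrow> nat \<Rightarrow> 'a::comm_ring_1"
  assumes "0 < d"
  shows "det (mat d d (\<lambda>(i, j). if j = 0 then f i else a i j)) =
    (\<Sum>i<d. f i * cofactor (mat d d (\<lambda>(i, j). if j = 0 then 0 else a i j)) i 0)"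
proof -
  let ?Z = "\<lambda>f. mat d d (\<lambda>(i, j). if j = 0 then f i else a i j)"
  have "det (?Z f) = (\<Sum>i<d. ?Z f $$ (i, 0) * cofactor (?Z f) i 0)"
    using assms by (intro laplace_expansion_column) auto
  also have "\<dots> = (\<Sum>i<d. f i * cofactor (?Z (\<lambda>_. 0)) i 0)"
  proof (intro sum.cong refl)
    fix i assume "i \<in> {..<d}"
    moreover have "mat_delete (?Z f) i 0 = mat_delete (?Z (\<lambda>_. 0)) i 0"
      by (rule eq_matI) (auto simp: mat_delete_def)
    ultimately show "?Z f $$ (i, 0) * cofactor (?Z f) i 0 = f i * cofactor (?Z (\<lambda>_. 0)) i 0"
      using assms by (simp add: cofactor_def)
  qed
  finally show ?thesis .
qed

lemma det_first_col_lincomb: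
  fixes a :: "nat \<Rightarrow> nat \<Rightarrow> 'a::comm_ring_1"
  assumes "0 < d"
  shows "det (mat d d (\<lambda>(i, j). if j = 0 then g i - (\<Sum>k\<in>{1..d}. c k * a i k) else a i j)) =
    det (mat d d (\<lambda>(i, j). if j = 0 then g i else a i j)) -
    c d * det (mat d d (\<lambda>(i, j). if j = 0 then a i d else a i j))"
proof -
  let ?Z = "\<lambda>f. mat d d (\<lambda>(i, j). if j = 0 then f i else a i j)"
  define L where "L f = (\<Sum>i<d. f i * cofactor (?Z (\<lambda>_. 0)) i 0)" for f
  have det_Z: "det (?Z f) = L f" for f
    unfolding L_def using assms by (rule det_first_col_expansion)
  have repeated_col: "L (\<lambda>i. a i k) = 0" if "1 \<le> k" "k < d" for k
  proof -
    have "det (?Z (\<lambda>i. a i k)) = 0"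
      by (rule det_identical_columns[of _ d 0 k]) (use that in \<open>auto intro: eq_vecI\<close>)
    then show ?thesis by (simp add: det_Z)
  qed
  have "L (\<lambda>i. g i - (\<Sum>k\<in>{1..d}. c k * a i k)) = L g - (\<Sum>k\<in>{1..d}. c k * L (\<lambda>i. a i k))"
    unfolding L_def
    by (simp add: left_diff_distrib sum_subtractf sum_distrib_left sum_distrib_right mult.assoc)
      (rule sum.swap)
  also have "(\<Sum>k\<in>{1..d}. c k * L (\<lambda>i. a i k)) = c d * L (\<lambda>i. a i d)"
  proof -
    have "{1..d} = insert d {1..<d}" using assms by auto
    then show ?thesis by (simp add: repeated_col)
  qed
  finally show ?thesis by (simp add: det_Z)
qed

lemma det_first_col_to_last:
  fixes a :: "nat \<Rightarrow> nat \<Rightarrow> 'a::comm_ring_1"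
  assumes "0 < d"
  shows "det (mat d d (\<lambda>(i, j). if j = 0 then f i else a i j)) =
    (-1) ^ (d - 1) * det (mat d d (\<lambda>(i, j). if j = d - 1 then f i else a i (Suc j)))"
proof -
  have d: "d = (d - 1) + 1" using assms by simp
  show ?thesis
    by (subst det_swap_cols[of _ "d - 1" 1, folded d])
      (auto intro!: arg_cong2[where f = "(*)"] arg_cong[where f = det] eq_matI)
qed

lemma dixon_mat_factor:
  fixes a :: "nat \<Rightarrow> nat \<Rightarrow> complex"
  assumes "0 < d"
  shows "mat d d (\<lambda>(i, j). a i 0 - (\<Sum>k\<in>{1..d}. dixon_pt d s t x (Suc j) k * a i k)) =
    mat d d (\<lambda>(i, j). if j = 0 then a i 0 - (\<Sum>k\<in>{1..d}. dixon_pt d s t x 1 k * a i k) else a i j) *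
    mat d d (\<lambda>(l, j). if l = 0 then 1 else if l \<le> j then s l - t l else 0)"
    (is "?D = ?Z * ?T")
proof (rule eq_matI)
  fix i j assume "i < dim_row (?Z * ?T)" "j < dim_col (?Z * ?T)"
  then have i: "i < d" and j: "j < d" by auto
  let ?p = "dixon_pt d s t x"
  have "(\<Sum>k\<in>{1..d}. ?p 1 k * a i k) - (\<Sum>k\<in>{1..d}. ?p (Suc j) k * a i k) =
      (\<Sum>k\<in>{1..d}. (?p 1 k - ?p (Suc j) k) * a i k)"
    by (simp add: sum_subtractf left_diff_distrib)
  also have "\<dots> = (\<Sum>l\<in>{1..<d}. ?T $$ (l, j) * a i l)"
  proof -
    have "{1..d} = insert d {1..<d}" using assms by auto
    then show ?thesis
      using j by (auto simp: dixon_pt_def intro!: sum.cong)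
  qed
  finally have telescope: "a i 0 - (\<Sum>k\<in>{1..d}. ?p (Suc j) k * a i k) =
      ?Z $$ (i, 0) + (\<Sum>l\<in>{1..<d}. a i l * ?T $$ (l, j))"
    using i j assms by (simp add: algebra_simps)
  have "(?Z * ?T) $$ (i, j) = (\<Sum>l\<in>{0..<d}. ?Z $$ (i, l) * ?T $$ (l, j))"
    using i j by (simp add: scalar_prod_def)
  also have "\<dots> = ?Z $$ (i, 0) + (\<Sum>l\<in>{1..<d}. a i l * ?T $$ (l, j))"
    using assms i j by (simp add: sum.atLeast_Suc_lessThan)
  finally show "?D $$ (i, j) = (?Z * ?T) $$ (i, j)"
    using i j telescope by simp
qed auto

lemma det_staircase_mat:
  fixes s t :: "nat \<Rightarrow> 'a::comm_ring_1"
  assumes "0 < d"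
  shows "det (mat d d (\<lambda>(l, j). if l = 0 then 1 else if l \<le> j then s l - t l else 0)) =
    (\<Prod>l\<in>{1..d-1}. s l - t l)"
proof -
  let ?T = "mat d d (\<lambda>(l, j). if l = 0 then 1 else if l \<le> j then s l - t l else (0::'a))"
  have "det ?T = prod_list (diag_mat ?T)"
    by (rule det_upper_triangular) (auto simp: upper_triangular_def)
  also have "\<dots> = (\<Prod>l\<in>{0..<d}. ?T $$ (l, l))"
    by (simp add: diag_mat_def prod.distinct_set_conv_list[symmetric])
  also have "\<dots> = (\<Prod>l\<in>{1..d-1}. s l - t l)"
  proof -
    have "{0..<d} = insert 0 {1..d-1}" using assms by auto
    then show ?thesis
      using assms by (auto intro!: prod.cong)
  qed
  finally show ?thesis .
qed

lemma det_dixon_mat: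
  fixes a :: "nat \<Rightarrow> nat \<Rightarrow> complex"
  assumes "0 < d"
  shows "det (mat d d (\<lambda>(i, j). a i 0 - (\<Sum>k\<in>{1..d}. dixon_pt d s t x (Suc j) k * a i k))) =
    (\<Prod>l\<in>{1..d-1}. s l - t l) * (-1) ^ (d - 1) *
    (det (mat d d (\<lambda>(i, j). if Suc j = d then a i 0 else a i (Suc j))) -
     x * det (mat d d (\<lambda>(i, j). a i (Suc j))))"
proof -
  let ?Z = "\<lambda>f. mat d d (\<lambda>(i, j). if j = 0 then f i else a i j)"
  have "det (?Z (\<lambda>i. a i 0 - (\<Sum>k\<in>{1..d}. dixon_pt d s t x 1 k * a i k))) =
      det (?Z (\<lambda>i. a i 0)) - x * det (?Z (\<lambda>i. a i d))"
    by (subst det_first_col_lincomb[OF assms]) (simp add: dixon_pt_def)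
  also have "det (?Z (\<lambda>i. a i 0)) = (-1) ^ (d - 1) * det (mat d d (\<lambda>(i, j). if Suc j = d then a i 0 else a i (Suc j)))"
    unfolding det_first_col_to_last[OF assms]
    using assms by (auto intro!: arg_cong[where f = det] eq_matI)
  also have "det (?Z (\<lambda>i. a i d)) = (-1) ^ (d - 1) * det (mat d d (\<lambda>(i, j). a i (Suc j)))"
    unfolding det_first_col_to_last[OF assms]
    using assms by (auto intro!: arg_cong[where f = det] eq_matI)
  finally have det_Z: "det (?Z (\<lambda>i. a i 0 - (\<Sum>k\<in>{1..d}. dixon_pt d s t x 1 k * a i k))) =
      (-1) ^ (d - 1) * (det (mat d d (\<lambda>(i, j). if Suc j = d then a i 0 else a i (Suc j))) -
        x * det (mat d d (\<lambda>(i, j). a i (Suc j))))"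
    by (simp add: algebra_simps)
  show ?thesis
    unfolding dixon_mat_factor[OF assms]
    by (subst det_mult[of _ d]) (auto simp: det_Z det_staircase_mat[OF assms])
qed

lemma kron_det_dixon:
  assumes "0 < d"
    and blocks: "\<And>i j. i \<in> {1..d} \<Longrightarrow> j \<in> {0..d} \<Longrightarrow> V i j \<in> carrier_mat (n i) (n i)"
  shows "kron_det d (\<lambda>i j. W n V d i (dixon_pt d s t x j)) =
    ((\<Prod>l\<in>{1..d-1}. s l - t l) * (-1) ^ (d - 1)) \<cdot>\<^sub>m (Deltad V d - x \<cdot>\<^sub>m Delta0 V d)"
proof -
  define ms where "ms = map n [1..<d+1]"
  define c where "c = (\<Prod>l\<in>{1..d-1}. s l - t l) * (-1) ^ (d - 1)"
  define A where "A i j = W n V d i (dixon_pt d s t x j)" for i j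
  define Ad where "Ad i j = (if j = d then V i 0 else V i j)" for i j
  have A_blocks: "A i j \<in> carrier_mat (n i) (n i)" for i j
    by (simp add: A_def W_def)
  have Ad_blocks: "Ad i j \<in> carrier_mat (n i) (n i)" and V_blocks: "V i j \<in> carrier_mat (n i) (n i)"
    if "i \<in> {1..d}" "j \<in> {1..d}" for i j
    using blocks that by (auto simp: Ad_def)
  have carriers: "kron_det d A \<in> carrier_mat (prod_list ms) (prod_list ms)"
      "kron_det d Ad \<in> carrier_mat (prod_list ms) (prod_list ms)"
      "kron_det d V \<in> carrier_mat (prod_list ms) (prod_list ms)"
    unfolding ms_def by (rule kron_det_carrier; rule A_blocks Ad_blocks V_blocks; assumption)+
  have "kron_det d A = c \<cdot>\<^sub>m (kron_det d Ad - x \<cdot>\<^sub>m kron_det d V)"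
  proof (rule eq_matI)
    fix r q assume "r < dim_row (c \<cdot>\<^sub>m (kron_det d Ad - x \<cdot>\<^sub>m kron_det d V))"
      "q < dim_col (c \<cdot>\<^sub>m (kron_det d Ad - x \<cdot>\<^sub>m kron_det d V))"
    then have r: "r < prod_list ms" and q: "q < prod_list ms"
      using carriers by auto
    define a where "a i k = V (Suc i) k $$ (radix_digit ms i r, radix_digit ms i q)" for i k
    have digits: "radix_digit ms i r < n (Suc i)" "radix_digit ms i q < n (Suc i)" if "i < d" for i
      using radix_digit_less[OF r, of i] radix_digit_less[OF q, of i] that
      by (auto simp: ms_def nth_map_upt simp del: upt_Suc)
    have index: "kron_det d B $$ (r, q) =
        det (mat d d (\<lambda>(i, j). B (Suc i) (Suc j) $$ (radix_digit ms i r, radix_digit ms i q)))"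
      if "\<And>i j. i \<in> {1..d} \<Longrightarrow> j \<in> {1..d} \<Longrightarrow> B i j \<in> carrier_mat (n i) (n i)"
      for B :: "nat \<Rightarrow> nat \<Rightarrow> complex mat"
      using that r q unfolding ms_def by (rule index_kron_det)
    have "kron_det d A $$ (r, q) =
        det (mat d d (\<lambda>(i, j). a i 0 - (\<Sum>k\<in>{1..d}. dixon_pt d s t x (Suc j) k * a i k)))"
      unfolding index[of A, OF A_blocks]
      by (intro arg_cong[where f = det] eq_matI) (auto simp: A_def W_def a_def digits)
    also have "\<dots> = c * (det (mat d d (\<lambda>(i, j). if Suc j = d then a i 0 else a i (Suc j))) -
        x * det (mat d d (\<lambda>(i, j). a i (Suc j))))"
      unfolding c_def using det_dixon_mat[OF assms(1)] by simp
    also have "\<dots> = c * (kron_det d Ad $$ (r, q) - x * kron_det d V $$ (r, q))"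
      by (subst (1 2) index)
        (use Ad_blocks V_blocks in \<open>auto simp: a_def Ad_def intro!: arg_cong[where f = det]\<close>)
    finally show "kron_det d A $$ (r, q) = (c \<cdot>\<^sub>m (kron_det d Ad - x \<cdot>\<^sub>m kron_det d V)) $$ (r, q)"
      using carriers r q by simp
  qed (use carriers in auto)
  then show ?thesis
    unfolding Deltad_def Delta0_def A_def Ad_def c_def .
qed

theorem propositionA1:
  fixes d :: nat and n :: "nat \<Rightarrow> nat" and V :: "nat \<Rightarrow> nat \<Rightarrow> complex mat"
  assumes "d \<ge> 2"
    and "\<And>i j. i \<in> {1..d} \<Longrightarrow> j \<in> {0..d} \<Longrightarrow> V i j \<in> carrier_mat (n i) (n i)"
  shows "\<exists>c \<in> {1, -1 :: complex}. \<forall>s t x.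
           (\<forall>i\<in>{1..d-1}. s i \<noteq> t i) \<longrightarrow>
           f_dixon n V d s t x = c \<cdot>\<^sub>m (Deltad V d - x \<cdot>\<^sub>m Delta0 V d)"
proof (intro bexI allI impI)
  show "(-1) ^ (d - 1) \<in> {1, -1 :: complex}"
    by (cases "even (d - 1)") auto
  fix s t :: "nat \<Rightarrow> complex" and x :: complex
  assume "\<forall>i\<in>{1..d-1}. s i \<noteq> t i"
  then have "(\<Prod>l\<in>{1..d-1}. s l - t l) \<noteq> 0" by simp
  moreover have "kron_det d (\<lambda>i j. W n V d i (dixon_pt d s t x j)) =
      ((\<Prod>l\<in>{1..d-1}. s l - t l) * (-1) ^ (d - 1)) \<cdot>\<^sub>m (Deltad V d - x \<cdot>\<^sub>m Delta0 V d)"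
    using assms by (intro kron_det_dixon) auto
  ultimately show "f_dixon n V d s t x = (-1) ^ (d - 1) \<cdot>\<^sub>m (Deltad V d - x \<cdot>\<^sub>m Delta0 V d)"
    unfolding f_dixon_def by (intro eq_matI) auto
qed

end
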